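(* Let $\Bbbk$ be a field, $n$ a positive integer, and $\mathbb{F}=\Bbbk[\xi]\simeq\Bbbk[x]/(f(x))$ a quadratic field extension where $\xi$ is a root of the irreducible polynomial $f$, which is either $f(x)=x^2+\tau$ or $f(x)=x^2+x+\tau$ with $\tau\in\Bbbk$. Let $Z=A+\xi B$ and $W=C+\xi D$ be in $M_n(\mathbb{F})$ with $A,B,C,D\in M_n(\Bbbk)$. If $f(x)=x^2+\tau$, then $ZW=N_1+\xi N_2$ where $M_1=(A-B)(C+\tau D)$, $M_2=AD$, $M_3=BC$, $N_1=M_1-\tau M_2+M_3$, $N_2=M_2+M_3$. If $f(x)=x^2+x+\tau$, then $ZW=N_1+\xi N_2$ where $M_1=AC$, $M_2=BD$, $M_3=(A-B)(C-D)$, $N_1=M_1-\tau M_2$, $N_2=M_1-M_3$. Moreover, these two algorithms are optimal in the sense of the minimum number of multiplications in $M_n(\Bbbk)$: among all algorithms computing the product map $M_n(\mathbb{F})\times M_n(\mathbb{F})\to M_n(\mathbb{F})$ using multiplications and additions of the indeterminate matrices together with scalar multiplications, none uses fewer than three multiplications in $M_n(\Bbbk)$.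
   Context: $M_n(\mathbb{L})$ denotes the algebra of $n\times n$ matrices over a field $\mathbb{L}$. Since $M_n(\mathbb{F})=M_n(\Bbbk)\otimes_\Bbbk\mathbb{F}$, every $Z\in M_n(\mathbb{F})$ is uniquely written $A+\xi B$ with $A,B\in M_n(\Bbbk)$. A multiplication in $M_n(\Bbbk)$ is a product of a linear combination of $A,B$ with a linear combination of $C,D$. *)

theory Defs
  imports "Jordan_Normal_Form.Matrix" "HOL-Computational_Algebra.Polynomial"
begin

definition is_field_emb :: "('k::field \<Rightarrow> 'F::field) \<Rightarrow> bool" where
  "is_field_emb h \<longleftrightarrow> h 1 = 1 \<and> (\<forall>x y. h (x + y) = h x + h y) \<and> (\<forall>x y. h (x * y) = h x * h y)"

definition lift_mat :: "('k::field \<Rightarrow> 'F::field) \<Rightarrow> 'F \<Rightarrow> 'k mat \<Rightarrow> 'k mat \<Rightarrow> 'F mat" where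
  "lift_mat h \<xi> A B = map_mat h A + \<xi> \<cdot>\<^sub>m map_mat h B"

definition mat_lincomb :: "nat \<Rightarrow> nat \<Rightarrow> (nat \<Rightarrow> 'a::comm_ring) \<Rightarrow> (nat \<Rightarrow> 'a mat) \<Rightarrow> 'a mat" where
  "mat_lincomb n r \<alpha> M = mat n n (\<lambda>(i,j). \<Sum>l<r. \<alpha> l * M l $$ (i,j))"

text \<open>A (bilinear) algorithm with r multiplications in M_n(k):
  M_l = (a_l A + b_l B)(c_l C + d_l D) for l < r, and ZW = N_1 + xi N_2 with
  N_1 = sum alpha_l M_l, N_2 = sum beta_l M_l; it computes the product
  if this holds for all A, B, C, D in M_n(k).\<close>
definition alg_computes_product ::
  "('k::field \<Rightarrow> 'F::field) \<Rightarrow> 'F \<Rightarrow> nat \<Rightarrow> nat \<Rightarrow> (nat \<Rightarrow> 'k) \<Rightarrow> (nat \<Rightarrow> 'k) \<Rightarrow> (nat \<Rightarrow> 'k)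
     \<Rightarrow> (nat \<Rightarrow> 'k) \<Rightarrow> (nat \<Rightarrow> 'k) \<Rightarrow> (nat \<Rightarrow> 'k) \<Rightarrow> bool" where
  "alg_computes_product h \<xi> n r a b c d \<alpha> \<beta> \<longleftrightarrow>
     (\<forall>A\<in>carrier_mat n n. \<forall>B\<in>carrier_mat n n. \<forall>C\<in>carrier_mat n n. \<forall>D\<in>carrier_mat n n.
        (let M = (\<lambda>l. (a l \<cdot>\<^sub>m A + b l \<cdot>\<^sub>m B) * (c l \<cdot>\<^sub>m C + d l \<cdot>\<^sub>m D))
         in lift_mat h \<xi> A B * lift_mat h \<xi> C D
              = lift_mat h \<xi> (mat_lincomb n r \<alpha> M) (mat_lincomb n r \<beta> M)))"

end

theory Submission
  imports Defs
begin

(* If \<xi>\<^sup>2 + s\<xi> + \<tau> = 0, then (a + \<xi>b)(c + \<xi>d) = (ac - \<tau>bd) + \<xi>(ad + bc - s bd);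
   applied entrywise, this gives both three-multiplication algorithms. For the lower bound, run
   an algorithm on scalar matrices: multiplication in F = k + k\<xi> then becomes a sum of r
   products of k-linear forms. If r \<le> 2, take z = x + \<xi>y \<noteq> 0 in the kernel of the first form:
   then w \<mapsto> zw, which is bijective on F, factors through the single form c\<^sub>1u + d\<^sub>1v,
   and this forces \<xi> = d\<^sub>1/c\<^sub>1 \<in> k. *)

lemma is_field_emb_imp_field_hom:
  assumes "is_field_emb h"
  shows "field_hom h"
proof -
  have add: "h (x + y) = h x + h y" and mult: "h (x * y) = h x * h y" and one: "h 1 = 1" for x y
    using assms unfolding is_field_emb_def by auto
  have "h 0 = 0"
    using add[of 0 0] by (metis add_0 add_cancel_right_right)
  with add mult one show ?thesis
    by unfold_locales auto
qed

lemma irreducible_monic_quadratic_no_root: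
  fixes s \<tau> t :: "'a::field"
  assumes "irreducible [:\<tau>, s, 1:]"
  shows "t^2 + s * t + \<tau> \<noteq> 0"
proof
  assume "t^2 + s * t + \<tau> = 0"
  then have "[:\<tau>, s, 1:] = [:-t, 1:] * [:t + s, 1:]"
    by (simp add: power2_eq_square algebra_simps eq_neg_iff_add_eq_0)
  from irreducibleD[OF assms this] show False
    by (simp add: is_unit_iff_degree)
qed

lemma quadratic_ext_mult:
  fixes \<xi> :: "'a::comm_ring_1"
  assumes "\<xi>^2 + s * \<xi> + \<tau> = 0"
  shows "(a + \<xi> * b) * (c + \<xi> * d) = (a * c - \<tau> * (b * d)) + \<xi> * (a * d + b * c - s * (b * d))"
proof -
  have "(a + \<xi> * b) * (c + \<xi> * d) - ((a * c - \<tau> * (b * d)) + \<xi> * (a * d + b * c - s * (b * d)))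
      = (\<xi>^2 + s * \<xi> + \<tau>) * (b * d)"
    by (simp add: algebra_simps power2_eq_square)
  with assms show ?thesis by simp
qed

lemma smult_one_mat_mult:
  "(p \<cdot>\<^sub>m 1\<^sub>m n) * (q \<cdot>\<^sub>m 1\<^sub>m n) = (p * q) \<cdot>\<^sub>m (1\<^sub>m n :: 'a::comm_ring_1 mat)"
proof -
  have "(p \<cdot>\<^sub>m 1\<^sub>m n) * (q \<cdot>\<^sub>m 1\<^sub>m n) = p \<cdot>\<^sub>m (1\<^sub>m n * (q \<cdot>\<^sub>m (1\<^sub>m n :: 'a mat)))"
    by (rule mult_smult_assoc_mat) auto
  also have "\<dots> = (p * q) \<cdot>\<^sub>m 1\<^sub>m n"
    by (rule eq_matI) auto
  finally show ?thesis .
qed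

lemma smult_one_mat_lincomb:
  "a \<cdot>\<^sub>m (x \<cdot>\<^sub>m 1\<^sub>m n) + b \<cdot>\<^sub>m (y \<cdot>\<^sub>m 1\<^sub>m n) = (a * x + b * y) \<cdot>\<^sub>m (1\<^sub>m n :: 'a::comm_ring_1 mat)"
  by (rule eq_matI) (auto simp: algebra_simps)

context field_hom
begin

lemma lift_mat_mult:
  assumes root: "\<xi>^2 + hom s * \<xi> + hom \<tau> = 0"
    and carr: "A \<in> carrier_mat n n" "B \<in> carrier_mat n n" "C \<in> carrier_mat n n" "D \<in> carrier_mat n n"
  shows "lift_mat hom \<xi> A B * lift_mat hom \<xi> C D
    = lift_mat hom \<xi> (A * C - \<tau> \<cdot>\<^sub>m (B * D)) (A * D + B * C - s \<cdot>\<^sub>m (B * D))"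
  using carr
  apply (intro eq_matI)
     apply (simp_all add: lift_mat_def scalar_prod_def hom_distribs sum.distrib[symmetric]
       sum_subtractf[symmetric] sum_distrib_left)
  apply (intro sum.cong refl)
  apply (simp only: distrib_left[symmetric] quadratic_ext_mult[OF root])
  done

lemma lift_mat_mult_x2_plus_tau:
  assumes root: "\<xi>^2 + hom \<tau> = 0"
    and carr: "A \<in> carrier_mat n n" "B \<in> carrier_mat n n" "C \<in> carrier_mat n n" "D \<in> carrier_mat n n"
  shows "lift_mat hom \<xi> A B * lift_mat hom \<xi> C D
    = lift_mat hom \<xi> ((A - B) * (C + \<tau> \<cdot>\<^sub>m D) - \<tau> \<cdot>\<^sub>m (A * D) + B * C) (A * D + B * C)"
proof -
  have "lift_mat hom \<xi> A B * lift_mat hom \<xi> C D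
      = lift_mat hom \<xi> (A * C - \<tau> \<cdot>\<^sub>m (B * D)) (A * D + B * C - 0 \<cdot>\<^sub>m (B * D))"
    using lift_mat_mult[where s = 0] root carr by simp
  also have "A * C - \<tau> \<cdot>\<^sub>m (B * D) = (A - B) * (C + \<tau> \<cdot>\<^sub>m D) - \<tau> \<cdot>\<^sub>m (A * D) + B * C"
    using carr
    apply (intro eq_matI)
       apply (simp_all add: scalar_prod_def sum.distrib[symmetric] sum_subtractf[symmetric] sum_distrib_left)
    apply (intro sum.cong refl)
    apply (simp add: algebra_simps)
    done
  also have "A * D + B * C - 0 \<cdot>\<^sub>m (B * D) = A * D + B * C"
    using carr by (intro eq_matI) auto
  finally show ?thesis .
qed

lemma lift_mat_mult_x2_plus_x_plus_tau:
  assumes root: "\<xi>^2 + \<xi> + hom \<tau> = 0"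
    and carr: "A \<in> carrier_mat n n" "B \<in> carrier_mat n n" "C \<in> carrier_mat n n" "D \<in> carrier_mat n n"
  shows "lift_mat hom \<xi> A B * lift_mat hom \<xi> C D
    = lift_mat hom \<xi> (A * C - \<tau> \<cdot>\<^sub>m (B * D)) (A * C - (A - B) * (C - D))"
proof -
  have "lift_mat hom \<xi> A B * lift_mat hom \<xi> C D
      = lift_mat hom \<xi> (A * C - \<tau> \<cdot>\<^sub>m (B * D)) (A * D + B * C - 1 \<cdot>\<^sub>m (B * D))"
    using lift_mat_mult[where s = 1] root carr by simp
  also have "A * D + B * C - 1 \<cdot>\<^sub>m (B * D) = A * C - (A - B) * (C - D)"
    using carr
    apply (intro eq_matI)
       apply (simp_all add: scalar_prod_def sum.distrib[symmetric] sum_subtractf[symmetric])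
    apply (intro sum.cong refl)
    apply (simp add: algebra_simps)
    done
  finally show ?thesis .
qed

lemma quadratic_root_not_in_range:
  assumes "irreducible [:\<tau>, s, 1:]" and "\<xi>^2 + hom s * \<xi> + hom \<tau> = 0"
  shows "\<xi> \<notin> range hom"
proof
  assume "\<xi> \<in> range hom"
  then obtain t where "\<xi> = hom t"
    by blast
  with assms(2) have "hom (t^2 + s * t + \<tau>) = 0"
    by (simp add: hom_distribs)
  with irreducible_monic_quadratic_no_root[OF assms(1)] show False
    by simp
qed

lemma hom_add_mult_eq_0_iff:
  assumes "\<xi> \<notin> range hom"
  shows "hom x + \<xi> * hom y = 0 \<longleftrightarrow> x = 0 \<and> y = 0"
proof
  assume eq: "hom x + \<xi> * hom y = 0"
  have "y = 0"
  proof (rule ccontr)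
    assume "y \<noteq> 0"
    from eq have "\<xi> * hom y = - hom x"
      by (simp add: eq_neg_iff_add_eq_0 add.commute)
    with \<open>y \<noteq> 0\<close> have "\<xi> = hom (- x / y)"
      by (simp add: hom_distribs field_simps)
    with assms show False
      by blast
  qed
  with eq show "x = 0 \<and> y = 0"
    by simp
qed simp

lemma lift_mat_smult_one_mat:
  "lift_mat hom \<xi> (x \<cdot>\<^sub>m 1\<^sub>m n) (y \<cdot>\<^sub>m 1\<^sub>m n) = (hom x + \<xi> * hom y) \<cdot>\<^sub>m 1\<^sub>m n"
  unfolding lift_mat_def by (rule eq_matI) auto

lemma alg_computes_product_scalar:
  assumes alg: "alg_computes_product hom \<xi> n r a b c d \<alpha> \<beta>" and n: "0 < n"
  shows "(hom x + \<xi> * hom y) * (hom u + \<xi> * hom v)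
    = (\<Sum>l<r. (hom (\<alpha> l) + \<xi> * hom (\<beta> l)) * hom (a l * x + b l * y) * hom (c l * u + d l * v))"
proof -
  let ?S = "\<lambda>p. p \<cdot>\<^sub>m (1\<^sub>m n :: 'a mat)"
  have "lift_mat hom \<xi> (?S x) (?S y) * lift_mat hom \<xi> (?S u) (?S v) =
    lift_mat hom \<xi> (mat_lincomb n r \<alpha> (\<lambda>l. (a l \<cdot>\<^sub>m ?S x + b l \<cdot>\<^sub>m ?S y) * (c l \<cdot>\<^sub>m ?S u + d l \<cdot>\<^sub>m ?S v)))
         (mat_lincomb n r \<beta> (\<lambda>l. (a l \<cdot>\<^sub>m ?S x + b l \<cdot>\<^sub>m ?S y) * (c l \<cdot>\<^sub>m ?S u + d l \<cdot>\<^sub>m ?S v)))"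
    using alg unfolding alg_computes_product_def Let_def by auto
  then have "(((hom x + \<xi> * hom y) * (hom u + \<xi> * hom v)) \<cdot>\<^sub>m 1\<^sub>m n) $$ (0,0) =
    lift_mat hom \<xi> (mat_lincomb n r \<alpha> (\<lambda>l. ?S ((a l * x + b l * y) * (c l * u + d l * v))))
         (mat_lincomb n r \<beta> (\<lambda>l. ?S ((a l * x + b l * y) * (c l * u + d l * v)))) $$ (0,0)"
    by (simp only: lift_mat_smult_one_mat smult_one_mat_lincomb smult_one_mat_mult)
  moreover define P where "P l = (a l * x + b l * y) * (c l * u + d l * v)" for l
  ultimately have "(hom x + \<xi> * hom y) * (hom u + \<xi> * hom v)
      = hom (\<Sum>l<r. \<alpha> l * P l) + \<xi> * hom (\<Sum>l<r. \<beta> l * P l)"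
    using n by (simp add: lift_mat_def mat_lincomb_def)
  also have "\<dots> = (\<Sum>l<r. (hom (\<alpha> l) + \<xi> * hom (\<beta> l)) * hom (P l))"
    by (simp add: hom_distribs sum_distrib_left sum.distrib[symmetric] distrib_right mult.assoc)
  finally show ?thesis
    by (simp add: P_def hom_mult mult.assoc)
qed

lemma mult_not_sum_of_two_rank_one:
  fixes a b c d :: "nat \<Rightarrow> 'a" and \<gamma> :: "nat \<Rightarrow> 'b"
  assumes "\<xi> \<notin> range hom"
  shows "\<not> (\<forall>x y u v. (hom x + \<xi> * hom y) * (hom u + \<xi> * hom v)
           = (\<Sum>l<2. \<gamma> l * hom (a l * x + b l * y) * hom (c l * u + d l * v)))"
proof
  assume decomp: "\<forall>x y u v. (hom x + \<xi> * hom y) * (hom u + \<xi> * hom v)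
           = (\<Sum>l<2. \<gamma> l * hom (a l * x + b l * y) * hom (c l * u + d l * v))"
  obtain x y where nontriv: "x \<noteq> 0 \<or> y \<noteq> 0" and ker: "a 0 * x + b 0 * y = 0"
  proof (cases "a 0 = 0 \<and> b 0 = 0")
    case True
    then show ?thesis
      using that[of 1 0] by simp
  next
    case False
    then show ?thesis
      using that[of "- b 0" "a 0"] by (auto simp: algebra_simps)
  qed
  define z where "z = hom x + \<xi> * hom y"
  define G where "G = \<gamma> 1 * hom (a 1 * x + b 1 * y)"
  have "z \<noteq> 0"
    using nontriv hom_add_mult_eq_0_iff[OF assms] by (simp add: z_def)
  have factor: "z * (hom u + \<xi> * hom v) = G * hom (c 1 * u + d 1 * v)" for u v
    using decomp ker by (simp add: z_def G_def numeral_2_eq_2 mult.assoc)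
  have zc: "z = G * hom (c 1)" and zd: "z * \<xi> = G * hom (d 1)"
    using factor[of 1 0] factor[of 0 1] by simp_all
  with \<open>z \<noteq> 0\<close> have "\<xi> = hom (d 1 / c 1)"
    by (auto simp: hom_distribs field_simps)
  with assms show False
    by blast
qed

lemma alg_computes_product_ge_3:
  assumes xi: "\<xi> \<notin> range hom" and n: "0 < n" and alg: "alg_computes_product hom \<xi> n r a b c d \<alpha> \<beta>"
  shows "3 \<le> r"
proof (rule ccontr)
  assume "\<not> 3 \<le> r"
  then have "{..<2} \<inter> {..<r} = {..<r}"
    by auto
  then have pad: "sum f {..<r} = (\<Sum>l<2. if l < r then f l else 0)" for f :: "nat \<Rightarrow> 'b"
    using sum.inter_restrict[of "{..<2}" f "{..<r}"] by simp
  define \<gamma> where "\<gamma> l = (if l < r then hom (\<alpha> l) + \<xi> * hom (\<beta> l) else 0)" for l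
  have "(hom x + \<xi> * hom y) * (hom u + \<xi> * hom v)
      = (\<Sum>l<2. \<gamma> l * hom (a l * x + b l * y) * hom (c l * u + d l * v))" for x y u v
    unfolding alg_computes_product_scalar[OF alg n] pad \<gamma>_def by (rule sum.cong) auto
  with mult_not_sum_of_two_rank_one[OF xi] show False
    by blast
qed

end

theorem proposition3p1:
  fixes h :: "'k::field \<Rightarrow> 'F::field" and \<xi> :: 'F and \<tau> :: 'k and n :: nat
    and A B C D :: "'k mat"
  assumes emb: "is_field_emb h"
    and gen: "\<forall>z. \<exists>x y. z = h x + \<xi> * h y"
    and n: "0 < n"
    and carr: "A \<in> carrier_mat n n" "B \<in> carrier_mat n n" "C \<in> carrier_mat n n" "D \<in> carrier_mat n n"
  shows
    "(irreducible [:\<tau>, 0, 1:] \<and> \<xi>^2 + h \<tau> = 0 \<longrightarrow>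
       (let M1 = (A - B) * (C + \<tau> \<cdot>\<^sub>m D); M2 = A * D; M3 = B * C;
            N1 = M1 - \<tau> \<cdot>\<^sub>m M2 + M3; N2 = M2 + M3
        in lift_mat h \<xi> A B * lift_mat h \<xi> C D = lift_mat h \<xi> N1 N2)
       \<and> (\<forall>r a b c d \<alpha> \<beta>. alg_computes_product h \<xi> n r a b c d \<alpha> \<beta> \<longrightarrow> 3 \<le> r))
     \<and>
     (irreducible [:\<tau>, 1, 1:] \<and> \<xi>^2 + \<xi> + h \<tau> = 0 \<longrightarrow>
       (let M1 = A * C; M2 = B * D; M3 = (A - B) * (C - D);
            N1 = M1 - \<tau> \<cdot>\<^sub>m M2; N2 = M1 - M3
        in lift_mat h \<xi> A B * lift_mat h \<xi> C D = lift_mat h \<xi> N1 N2)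
       \<and> (\<forall>r a b c d \<alpha> \<beta>. alg_computes_product h \<xi> n r a b c d \<alpha> \<beta> \<longrightarrow> 3 \<le> r))"
proof -
  interpret field_hom h
    using emb by (rule is_field_emb_imp_field_hom)
  have not_in_range_x2_plus_tau: "\<xi> \<notin> range h" if "irreducible [:\<tau>, 0, 1:]" "\<xi>^2 + h \<tau> = 0"
    using quadratic_root_not_in_range[of \<tau> 0 \<xi>] that by simp
  have not_in_range_x2_plus_x_plus_tau: "\<xi> \<notin> range h" if "irreducible [:\<tau>, 1, 1:]" "\<xi>^2 + \<xi> + h \<tau> = 0"
    using quadratic_root_not_in_range[of \<tau> 1 \<xi>] that by simp
  show ?thesis
    unfolding Let_def
    using lift_mat_mult_x2_plus_tau[OF _ carr] lift_mat_mult_x2_plus_x_plus_tau[OF _ carr]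
      not_in_range_x2_plus_tau not_in_range_x2_plus_x_plus_tau alg_computes_product_ge_3[OF _ n]
    by blast
qed

end
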